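(* Let $L\ge 1$ and, for each layer $\ell\in\{1,\dots,L\}$, let $K^{\ell}\ge 1$ and $d^{\ell}\ge 1$ be integers and $a^{\ell}$ a real number with $0\le a^{\ell}<1$. Consider the linear one-dimensional network on real sequences indexed by $\mathbb{Z}$ whose $\ell$-th layer maps $y^{\ell-1}$ to $y^{\ell}$ via $$y^{\ell}_i - a^{\ell}\, y^{\ell}_{i-1} = \sum_{p=0}^{K^{\ell}-1} \frac{1-a^{\ell}}{K^{\ell}}\, y^{\ell-1}_{i-d^{\ell}p}\qquad\text{for all } i\in\mathbb{Z}$$ (i.e. uniform moving-average coefficients of length $K^{\ell}$ with dilation $d^{\ell}$, and autoregressive coefficients $1,-a^{\ell}$), where $y^0$ is the network input and $y^L$ its output. Then the radius of the effective receptive field of this network satisfies $$r(\mathrm{ERF})^2 = \sum_{\ell=1}^{L}\left[\frac{(d^{\ell})^2\big((K^{\ell})^2-1\big)}{12} + \frac{a^{\ell}}{(1-a^{\ell})^2}\right].$$ In particular, when $a^{\ell}=0$ for all $\ell$ (so that each layer is an ordinary, possibly dilated, convolution), $r(\mathrm{ERF})^2=\sum_{\ell=1}^{L}(d^{\ell})^2\big((K^{\ell})^2-1\big)/12$.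
   Context: Each layer relation is interpreted as the linear map $y^{\ell}=f^{\ell}*y^{\ell-1}$, where $*$ is convolution of sequences on $\mathbb{Z}$ and $f^{\ell}=\tilde a^{\ell}*w^{\ell}$, with $w^{\ell}_{d^{\ell}p}=(1-a^{\ell})/K^{\ell}$ for $p=0,\dots,K^{\ell}-1$ (and $w^{\ell}_j=0$ otherwise) and $\tilde a^{\ell}_j=(a^{\ell})^j$ for $j\ge 0$, $\tilde a^{\ell}_j=0$ for $j<0$ (the inverse convolution of the autoregressive filter $(1,-a^{\ell})$, i.e. $y^{\ell}_i=\sum_{j\ge0}(a^{\ell})^j(w^{\ell}*y^{\ell-1})_{i-j}$). For this network the quantity $g(p)=\left|\partial y^{L}_i/\partial y^{0}_{i-p}\right|$ does not depend on $i$. The effective receptive field is the normalized distribution $\mathrm{ERF}(p)=g(p)/\sum_{q\in\mathbb{Z}} g(q)$, $p\in\mathbb{Z}$, and its radius $r(\mathrm{ERF})$ is defined by $r(\mathrm{ERF})^2=\sum_{p}p^2\,\mathrm{ERF}(p)-\big(\sum_p |p|\,\mathrm{ERF}(p)\big)^2$. *)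

theory Defs
  imports "HOL-Analysis.Analysis"
begin

definition conv :: "(int \<Rightarrow> real) \<Rightarrow> (int \<Rightarrow> real) \<Rightarrow> int \<Rightarrow> real" where
  "conv f g i = (\<Sum>\<^sub>\<infinity>j\<in>UNIV. f j * g (i - j))"

definition delta :: "int \<Rightarrow> real" where
  "delta j = (if j = 0 then 1 else 0)"

definition ma_filter :: "real \<Rightarrow> nat \<Rightarrow> nat \<Rightarrow> int \<Rightarrow> real" where
  "ma_filter a K d j =
     (if \<exists>p::nat. p < K \<and> j = int d * int p then (1 - a) / real K else 0)"

text \<open>Inverse of the autoregressive filter (1, -a): a^j for j >= 0, 0 otherwise.\<close>
definition ar_inv :: "real \<Rightarrow> int \<Rightarrow> real" where
  "ar_inv a j = (if 0 \<le> j then a ^ nat j else 0)"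

definition layer_filter :: "real \<Rightarrow> nat \<Rightarrow> nat \<Rightarrow> int \<Rightarrow> real" where
  "layer_filter a K d = conv (ar_inv a) (ma_filter a K d)"

fun net_filter :: "(nat \<Rightarrow> real) \<Rightarrow> (nat \<Rightarrow> nat) \<Rightarrow> (nat \<Rightarrow> nat) \<Rightarrow> nat \<Rightarrow> int \<Rightarrow> real" where
  "net_filter a K d 0 = delta"
| "net_filter a K d (Suc l) =
     conv (layer_filter (a (Suc l)) (K (Suc l)) (d (Suc l))) (net_filter a K d l)"

text \<open>g(p) = |d y^L_i / d y^0_{i-p}| = |(f^L * ... * f^1)_p|.\<close>
definition erf_g :: "(nat \<Rightarrow> real) \<Rightarrow> (nat \<Rightarrow> nat) \<Rightarrow> (nat \<Rightarrow> nat) \<Rightarrow> nat \<Rightarrow> int \<Rightarrow> real" where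
  "erf_g a K d L p = \<bar>net_filter a K d L p\<bar>"

definition ERF :: "(nat \<Rightarrow> real) \<Rightarrow> (nat \<Rightarrow> nat) \<Rightarrow> (nat \<Rightarrow> nat) \<Rightarrow> nat \<Rightarrow> int \<Rightarrow> real" where
  "ERF a K d L p = erf_g a K d L p / (\<Sum>\<^sub>\<infinity>q\<in>UNIV. erf_g a K d L q)"

definition erf_radius :: "(int \<Rightarrow> real) \<Rightarrow> real" where
  "erf_radius e = sqrt ((\<Sum>\<^sub>\<infinity>p\<in>UNIV. (real_of_int p)\<^sup>2 * e p)
                        - (\<Sum>\<^sub>\<infinity>p\<in>UNIV. \<bar>real_of_int p\<bar> * e p)\<^sup>2)"

end

theory Submission
  imports Defs
begin

text \<open>
  All filters are nonnegative and vanish on negative indices, so they are (unnormalized)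
  distributions on the naturals, and their moments can be computed with ordinary series.
  Under convolution masses multiply and the variances of the normalized distributions add.
  A layer filter is the convolution of a geometric sequence (mass 1/(1-a), variance a/(1-a)^2)
  with a uniform distribution on {0, d, ..., (K-1)d} (mass 1-a, variance d^2(K^2-1)/12),
  so the network filter has mass 1 and variance the stated sum. Mass 1 makes the ERF equal to
  the network filter, and since it lives on the nonnegative integers, |p| = p on its support
  and the radius squared is exactly its variance.
\<close>

definition has_moments :: "(int \<Rightarrow> real) \<Rightarrow> real \<Rightarrow> real \<Rightarrow> real \<Rightarrow> bool" where
  "has_moments f c m s \<longleftrightarrow> (\<forall>j. 0 \<le> f j) \<and> (\<forall>j<0. f j = 0) \<and>
     (\<lambda>n. f (int n)) sums c \<and> (\<lambda>n. real n * f (int n)) sums m \<and>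
     (\<lambda>n. (real n)\<^sup>2 * f (int n)) sums s"

definition variance_of_moments :: "real \<Rightarrow> real \<Rightarrow> real \<Rightarrow> real" where
  "variance_of_moments c m s = s / c - (m / c)\<^sup>2"

lemma conv_eq_0_if_neg:
  assumes "\<forall>j<0. f j = 0" "\<forall>j<0. g j = 0" "i < 0"
  shows "conv f g i = 0"
proof -
  have "(\<lambda>j. f j * g (i - j)) = (\<lambda>_. 0)"
  proof
    show "f j * g (i - j) = 0" for j
      using assms by (cases "j < 0") auto
  qed
  then show ?thesis unfolding conv_def by simp
qed

lemma conv_of_nat:
  assumes "\<forall>j<0. f j = 0" "\<forall>j<0. g j = 0"
  shows "conv f g (int n) = (\<Sum>i\<le>n. f (int i) * g (int (n - i)))"
proof -
  have "conv f g (int n) = infsum (\<lambda>j. f j * g (int n - j)) (int ` {..n})"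
    unfolding conv_def
  proof (rule infsum_cong_neutral)
    fix j assume "j \<in> UNIV - int ` {..n}"
    then have "j < 0 \<or> j > int n"
      by (metis DiffD2 atMost_iff image_eqI int_nat_eq linorder_not_less nat_le_iff)
    then show "f j * g (int n - j) = 0" using assms by auto
  qed auto
  also have "\<dots> = (\<Sum>j\<in>int ` {..n}. f j * g (int n - j))"
    by simp
  also have "\<dots> = (\<Sum>i\<le>n. f (int i) * g (int (n - i)))"
    by (subst sum.reindex) (auto simp: of_nat_diff)
  finally show ?thesis .
qed

lemma Cauchy_product_sums_nonneg:
  fixes a b :: "nat \<Rightarrow> real"
  assumes "\<And>n. 0 \<le> a n" "\<And>n. 0 \<le> b n" "a sums A" "b sums B"
  shows "(\<lambda>k. \<Sum>i\<le>k. a i * b (k - i)) sums (A * B)"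
proof -
  have "summable (\<lambda>k. norm (a k))" "summable (\<lambda>k. norm (b k))"
    using assms by (auto simp: sums_iff)
  from Cauchy_product_sums[OF this] show ?thesis
    using assms by (simp add: sums_iff)
qed

lemma has_moments_conv:
  assumes f: "has_moments f c1 m1 s1" and g: "has_moments g c2 m2 s2"
  shows "has_moments (conv f g) (c1 * c2) (m1 * c2 + c1 * m2) (s1 * c2 + 2 * m1 * m2 + c1 * s2)"
proof -
  define F where "F = (\<lambda>n. f (int n))"
  define G where "G = (\<lambda>n. g (int n))"
  have f_causal: "\<forall>j<0. f j = 0" and g_causal: "\<forall>j<0. g j = 0"
    using f g by (auto simp: has_moments_def)
  have F: "\<And>n. 0 \<le> F n" "F sums c1" "(\<lambda>n. real n * F n) sums m1" "(\<lambda>n. (real n)\<^sup>2 * F n) sums s1"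
    using f by (auto simp: has_moments_def F_def)
  have G: "\<And>n. 0 \<le> G n" "G sums c2" "(\<lambda>n. real n * G n) sums m2" "(\<lambda>n. (real n)\<^sup>2 * G n) sums s2"
    using g by (auto simp: has_moments_def G_def)
  have conv_eq: "conv f g (int k) = (\<Sum>i\<le>k. F i * G (k - i))" for k
    using conv_of_nat[OF f_causal g_causal] by (simp add: F_def G_def)
  \<comment> \<open>Split the weights as k = i + (k - i) inside the Cauchy product.\<close>
  have mean: "real k * conv f g (int k) =
      (\<Sum>i\<le>k. (real i * F i) * G (k - i)) + (\<Sum>i\<le>k. F i * (real (k - i) * G (k - i)))" for k
    unfolding conv_eq sum_distrib_left sum.distrib[symmetric]
    by (rule sum.cong) (auto simp: of_nat_diff algebra_simps)
  have square: "(real k)\<^sup>2 * conv f g (int k) =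
      (\<Sum>i\<le>k. ((real i)\<^sup>2 * F i) * G (k - i))
      + 2 * (\<Sum>i\<le>k. (real i * F i) * (real (k - i) * G (k - i)))
      + (\<Sum>i\<le>k. F i * ((real (k - i))\<^sup>2 * G (k - i)))" for k
    unfolding conv_eq sum_distrib_left sum.distrib[symmetric]
    by (rule sum.cong) (auto simp: of_nat_diff algebra_simps power2_eq_square)
  have "(\<lambda>k. conv f g (int k)) sums (c1 * c2)"
    unfolding conv_eq by (intro Cauchy_product_sums_nonneg F G)
  moreover have "(\<lambda>k. real k * conv f g (int k)) sums (m1 * c2 + c1 * m2)"
    unfolding mean by (intro sums_add Cauchy_product_sums_nonneg F G) (simp_all add: F(1) G(1))
  moreover have "(\<lambda>k. (real k)\<^sup>2 * conv f g (int k)) sums (s1 * c2 + 2 * m1 * m2 + c1 * s2)"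
    unfolding square mult.assoc[of 2 m1]
    by (intro sums_add sums_mult Cauchy_product_sums_nonneg F G) (simp_all add: F(1) G(1))
  moreover have "0 \<le> conv f g j" for j
  proof (cases "j < 0")
    case True
    then show ?thesis using conv_eq_0_if_neg[OF f_causal g_causal] by simp
  next
    case False
    then obtain n where "j = int n" by (metis nonneg_int_cases not_less)
    then show ?thesis using F(1) G(1) by (simp add: conv_eq sum_nonneg)
  qed
  ultimately show ?thesis
    unfolding has_moments_def using conv_eq_0_if_neg[OF f_causal g_causal] by auto
qed

lemma variance_of_moments_scaled:
  "c \<noteq> 0 \<Longrightarrow> variance_of_moments c (c * m) (c * s) = s - m\<^sup>2"
  by (simp add: variance_of_moments_def)

lemma has_moments_conv_variance:
  assumes "has_moments f c1 m1 s1" "has_moments g c2 m2 s2" "c1 \<noteq> 0" "c2 \<noteq> 0"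
  obtains m s where "has_moments (conv f g) (c1 * c2) m s"
    and "variance_of_moments (c1 * c2) m s = variance_of_moments c1 m1 s1 + variance_of_moments c2 m2 s2"
proof
  show "has_moments (conv f g) (c1 * c2) (m1 * c2 + c1 * m2) (s1 * c2 + 2 * m1 * m2 + c1 * s2)"
    using has_moments_conv[OF assms(1,2)] .
  show "variance_of_moments (c1 * c2) (m1 * c2 + c1 * m2) (s1 * c2 + 2 * m1 * m2 + c1 * s2) =
      variance_of_moments c1 m1 s1 + variance_of_moments c2 m2 s2"
    using assms(3,4) by (simp add: variance_of_moments_def field_simps power2_eq_square)
qed

lemma has_moments_delta: "has_moments delta 1 0 0"
proof -
  have "(\<lambda>n. h (real n) * delta (int n)) sums (\<Sum>n\<in>{0}. h (real n) * delta (int n))" for h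
    by (rule sums_finite) (auto simp: delta_def)
  from this[of "\<lambda>_. 1"] this[of "\<lambda>x. x"] this[of "\<lambda>x. x\<^sup>2"] show ?thesis
    unfolding has_moments_def by (auto simp: delta_def)
qed

lemma has_moments_ar_inv:
  assumes "0 \<le> a" "a < 1"
  shows "has_moments (ar_inv a) (1 / (1 - a)) (a / (1 - a)\<^sup>2) (a * (1 + a) / (1 - a) ^ 3)"
proof -
  have a: "norm a < 1" using assms by simp
  obtain b where b: "a = 1 - b" "b > 0"
    using assms by (intro that[of "1 - a"]) auto
  have mass: "(\<lambda>n. a ^ n) sums (1 / (1 - a))"
    using geometric_sums[OF a] .
  have "(\<lambda>n. of_nat (Suc n) * a ^ n - a ^ n) sums (1 / (1 - a)\<^sup>2 - 1 / (1 - a))"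
    by (intro sums_diff geometric_deriv_sums mass a)
  moreover have "1 / (1 - a)\<^sup>2 - 1 / (1 - a) = a / (1 - a)\<^sup>2"
    unfolding b(1) using b(2) by (simp add: field_simps power2_eq_square)
  ultimately have mean: "(\<lambda>n. real n * a ^ n) sums (a / (1 - a)\<^sup>2)"
    by (simp add: algebra_simps)
  \<comment> \<open>The Cauchy product of the first moment with the geometric series has terms
    k (k + 1) / 2 * a^k, and k^2 = k (k + 1) - k.\<close>
  have Cauchy: "(\<lambda>k. \<Sum>i\<le>k. (real i * a ^ i) * a ^ (k - i)) sums (a / (1 - a)\<^sup>2 * (1 / (1 - a)))"
    by (rule Cauchy_product_sums_nonneg[OF _ _ mean mass]) (use assms in auto)
  have Cauchy_term: "2 * (\<Sum>i\<le>k. (real i * a ^ i) * a ^ (k - i)) = real k * (real k + 1) * a ^ k" for k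
  proof -
    have "(\<Sum>i\<le>k. (real i * a ^ i) * a ^ (k - i)) = (\<Sum>i = 0..k. real i) * a ^ k"
      by (simp add: atMost_atLeast0 sum_distrib_right mult.assoc power_add[symmetric])
    then show ?thesis by (simp add: double_gauss_sum)
  qed
  have "(\<lambda>k. real k * (real k + 1) * a ^ k) sums (2 * (a / (1 - a)\<^sup>2 * (1 / (1 - a))))"
    using sums_mult[OF Cauchy, of 2] unfolding Cauchy_term .
  from sums_diff[OF this mean]
  have "(\<lambda>k. real k * (real k + 1) * a ^ k - real k * a ^ k) sums
      (2 * (a / (1 - a)\<^sup>2 * (1 / (1 - a))) - a / (1 - a)\<^sup>2)" .
  moreover have "2 * (a / (1 - a)\<^sup>2 * (1 / (1 - a))) - a / (1 - a)\<^sup>2 = a * (1 + a) / (1 - a) ^ 3"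
    unfolding b(1) using b(2) by (simp add: field_simps power2_eq_square power3_eq_cube)
  ultimately have square: "(\<lambda>n. (real n)\<^sup>2 * a ^ n) sums (a * (1 + a) / (1 - a) ^ 3)"
    by (simp add: algebra_simps power2_eq_square)
  have ar_inv_nat: "(\<lambda>n. ar_inv a (int n)) = (\<lambda>n. a ^ n)"
    by (auto simp: ar_inv_def)
  show ?thesis
    unfolding has_moments_def ar_inv_nat using mass mean square assms by (auto simp: ar_inv_def)
qed

lemma variance_of_moments_ar_inv:
  assumes "a < 1"
  shows "variance_of_moments (1 / (1 - a)) (a / (1 - a)\<^sup>2) (a * (1 + a) / (1 - a) ^ 3) =
    a / (1 - a)\<^sup>2"
proof -
  obtain b where b: "a = 1 - b" "b > 0"
    using assms by (intro that[of "1 - a"]) auto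
  show ?thesis
    unfolding b(1) using b(2) by (simp add: variance_of_moments_def field_simps power2_eq_square power3_eq_cube)
qed

lemma sums_ma_filter_weighted:
  assumes "d \<ge> 1"
  shows "(\<lambda>n. h (real n) * ma_filter a K d (int n)) sums
    ((1 - a) / real K * (\<Sum>p<K. h (real d * real p)))"
proof -
  let ?grid = "(\<lambda>p. d * p) ` {..<K}"
  have "(\<lambda>n. h (real n) * ma_filter a K d (int n)) sums
      (\<Sum>n\<in>?grid. h (real n) * ma_filter a K d (int n))"
  proof (rule sums_finite)
    fix n assume "n \<notin> ?grid"
    then have "\<not> (\<exists>p::nat. p < K \<and> int n = int d * int p)"
      by (metis image_eqI lessThan_iff of_nat_mult of_nat_eq_iff)
    then show "h (real n) * ma_filter a K d (int n) = 0"
      by (auto simp: ma_filter_def)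
  qed simp
  also have "(\<Sum>n\<in>?grid. h (real n) * ma_filter a K d (int n)) =
      (\<Sum>p<K. h (real d * real p) * ((1 - a) / real K))"
    using assms by (subst sum.reindex) (auto simp: inj_on_def ma_filter_def intro!: sum.cong)
  finally show ?thesis
    by (simp add: sum_distrib_left mult.commute)
qed

lemma has_moments_ma_filter:
  assumes "d \<ge> 1" "K \<ge> 1" "a \<le> 1"
  shows "has_moments (ma_filter a K d) (1 - a) ((1 - a) * (real d * (real K - 1) / 2))
    ((1 - a) * ((real d)\<^sup>2 * (real K - 1) * (2 * real K - 1) / 6))"
proof -
  have sum_id: "(\<Sum>p<K. real p) = real K * (real K - 1) / 2"
    by (induction K) (simp_all add: field_simps)
  have sum_square: "(\<Sum>p<K. (real p)\<^sup>2) = real K * (real K - 1) * (2 * real K - 1) / 6"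
    by (induction K) (simp_all add: field_simps power2_eq_square)
  have "(\<lambda>n. ma_filter a K d (int n)) sums (1 - a)"
    using sums_ma_filter_weighted[OF assms(1), of "\<lambda>_. 1" a K] assms(2) by simp
  moreover have "(\<lambda>n. real n * ma_filter a K d (int n)) sums ((1 - a) * (real d * (real K - 1) / 2))"
    using sums_ma_filter_weighted[OF assms(1), of "\<lambda>x. x" a K] assms(2)
    by (simp add: sum_distrib_left[symmetric] sum_id)
  moreover have "(\<lambda>n. (real n)\<^sup>2 * ma_filter a K d (int n)) sums
      ((1 - a) * ((real d)\<^sup>2 * (real K - 1) * (2 * real K - 1) / 6))"
    using sums_ma_filter_weighted[OF assms(1), of "\<lambda>x. x\<^sup>2" a K] assms(2)
    by (simp add: power_mult_distrib sum_distrib_left[symmetric] sum_square mult.assoc)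
  moreover have "0 \<le> ma_filter a K d j" for j
    using assms by (simp add: ma_filter_def)
  moreover have "ma_filter a K d j = 0" if "j < 0" for j
    using that by (auto simp: ma_filter_def mult_less_0_iff)
  ultimately show ?thesis
    unfolding has_moments_def by blast
qed

lemma variance_of_moments_ma_filter:
  assumes "a < 1"
  shows "variance_of_moments (1 - a) ((1 - a) * (real d * (real K - 1) / 2))
      ((1 - a) * ((real d)\<^sup>2 * (real K - 1) * (2 * real K - 1) / 6)) =
    (real d)\<^sup>2 * ((real K)\<^sup>2 - 1) / 12"
  using assms by (subst variance_of_moments_scaled) (simp_all add: field_simps power2_eq_square)

lemma has_moments_layer_filter:
  assumes "d \<ge> 1" "K \<ge> 1" "0 \<le> a" "a < 1"
  obtains m s where "has_moments (layer_filter a K d) 1 m s"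
    and "variance_of_moments 1 m s = (real d)\<^sup>2 * ((real K)\<^sup>2 - 1) / 12 + a / (1 - a)\<^sup>2"
proof -
  note ar = has_moments_ar_inv[OF assms(3,4)]
  note ma = has_moments_ma_filter[OF assms(1,2) less_imp_le[OF assms(4)]]
  have "1 / (1 - a) \<noteq> 0" "1 - a \<noteq> 0"
    using assms by auto
  then obtain m s where "has_moments (layer_filter a K d) (1 / (1 - a) * (1 - a)) m s"
    and "variance_of_moments (1 / (1 - a) * (1 - a)) m s =
      a / (1 - a)\<^sup>2 + (real d)\<^sup>2 * ((real K)\<^sup>2 - 1) / 12"
    using has_moments_conv_variance[OF ar ma]
    unfolding layer_filter_def variance_of_moments_ar_inv[OF assms(4)]
      variance_of_moments_ma_filter[OF assms(4)]
    by blast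
  moreover have "1 / (1 - a) * (1 - a) = 1"
    using assms by simp
  ultimately show ?thesis
    using that by (simp add: add.commute)
qed

lemma has_moments_net_filter:
  assumes "\<And>l. l \<in> {1..L} \<Longrightarrow> K l \<ge> 1 \<and> d l \<ge> 1 \<and> 0 \<le> a l \<and> a l < 1"
  obtains m s where "has_moments (net_filter a K d L) 1 m s"
    and "variance_of_moments 1 m s =
      (\<Sum>l=1..L. (real (d l))\<^sup>2 * ((real (K l))\<^sup>2 - 1) / 12 + a l / (1 - a l)\<^sup>2)"
  using assms
proof (induction L arbitrary: thesis)
  case 0
  show ?case
    by (rule "0.prems"(1)[of 0 0]) (simp_all add: has_moments_delta variance_of_moments_def)
next
  case (Suc L)
  obtain m s where net: "has_moments (net_filter a K d L) 1 m s"
    and net_variance: "variance_of_moments 1 m s =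
      (\<Sum>l=1..L. (real (d l))\<^sup>2 * ((real (K l))\<^sup>2 - 1) / 12 + a l / (1 - a l)\<^sup>2)"
    using Suc.IH Suc.prems(2) by auto
  obtain m' s' where layer: "has_moments (layer_filter (a (Suc L)) (K (Suc L)) (d (Suc L))) 1 m' s'"
    and layer_variance: "variance_of_moments 1 m' s' = (real (d (Suc L)))\<^sup>2 * ((real (K (Suc L)))\<^sup>2 - 1) / 12
      + a (Suc L) / (1 - a (Suc L))\<^sup>2"
    using has_moments_layer_filter[of "d (Suc L)" "K (Suc L)" "a (Suc L)"] Suc.prems(2)[of "Suc L"]
    by auto
  obtain m'' s'' where "has_moments (net_filter a K d (Suc L)) 1 m'' s''"
    and "variance_of_moments 1 m'' s'' = variance_of_moments 1 m' s' + variance_of_moments 1 m s"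
    using has_moments_conv_variance[OF layer net] by auto
  then show ?case
    using Suc.prems(1) layer_variance net_variance by (simp add: add.commute)
qed

lemma has_sum_int_if_sums_nat:
  fixes h :: "int \<Rightarrow> real"
  assumes "\<forall>j<0. h j = 0" "\<And>n. 0 \<le> h (int n)" "(\<lambda>n. h (int n)) sums S"
  shows "(h has_sum S) UNIV"
proof -
  have "summable (\<lambda>n. norm (h (int n)))"
    using assms(2,3) by (simp add: sums_iff)
  from norm_summable_imp_has_sum[OF this assms(3)]
  have "(h has_sum S) (range int)"
    by (subst has_sum_reindex) (auto simp: inj_on_def comp_def)
  moreover have "(h has_sum S) UNIV \<longleftrightarrow> (h has_sum S) (range int)"
  proof (rule has_sum_cong_neutral)
    fix j assume "j \<in> UNIV - range int"
    then have "j < 0"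
      by (metis DiffD2 nonneg_int_cases not_less rangeI)
    then show "h j = 0"
      using assms(1) by simp
  qed auto
  ultimately show ?thesis by simp
qed

lemma has_moments_variance_nonneg:
  assumes "has_moments f 1 m s"
  shows "m\<^sup>2 \<le> s"
proof -
  have mass: "(\<lambda>n. f (int n)) sums 1" and mean: "(\<lambda>n. real n * f (int n)) sums m"
    and square: "(\<lambda>n. (real n)\<^sup>2 * f (int n)) sums s" and nonneg: "\<And>j. 0 \<le> f j"
    using assms by (auto simp: has_moments_def)
  have "(\<lambda>n. (real n)\<^sup>2 * f (int n) - 2 * m * (real n * f (int n)) + m\<^sup>2 * f (int n)) sums
      (s - 2 * m * m + m\<^sup>2 * 1)"
    by (rule sums_add[OF sums_diff[OF square sums_mult[OF mean]] sums_mult[OF mass]])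
  also have "(\<lambda>n. (real n)\<^sup>2 * f (int n) - 2 * m * (real n * f (int n)) + m\<^sup>2 * f (int n)) =
      (\<lambda>n. (real n - m)\<^sup>2 * f (int n))"
    by (simp add: fun_eq_iff power2_eq_square algebra_simps)
  finally have centered: "(\<lambda>n. (real n - m)\<^sup>2 * f (int n)) sums (s - 2 * m * m + m\<^sup>2 * 1)" .
  have "0 \<le> s - 2 * m * m + m\<^sup>2 * 1"
    by (rule sums_le[OF _ sums_zero centered]) (simp add: nonneg)
  then show ?thesis
    by (simp add: power2_eq_square)
qed

lemma erf_radius_power2:
  assumes "has_moments e 1 m s"
  shows "(erf_radius e)\<^sup>2 = s - m\<^sup>2"
proof -
  have nonneg: "\<And>j. 0 \<le> e j" and causal: "\<forall>j<0. e j = 0"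
    using assms by (auto simp: has_moments_def)
  have "((\<lambda>p. (real_of_int p)\<^sup>2 * e p) has_sum s) UNIV"
    by (rule has_sum_int_if_sums_nat) (use assms nonneg causal in \<open>auto simp: has_moments_def\<close>)
  moreover have "((\<lambda>p. \<bar>real_of_int p\<bar> * e p) has_sum m) UNIV"
    by (rule has_sum_int_if_sums_nat) (use assms nonneg causal in \<open>auto simp: has_moments_def\<close>)
  ultimately show ?thesis
    using has_moments_variance_nonneg[OF assms] by (simp add: erf_radius_def infsumI)
qed

lemma ERF_eq_net_filter:
  assumes "has_moments (net_filter a K d L) 1 m s"
  shows "ERF a K d L = net_filter a K d L"
proof -
  have "erf_g a K d L = net_filter a K d L"
    using assms by (simp add: fun_eq_iff erf_g_def has_moments_def)
  moreover have "(net_filter a K d L has_sum 1) UNIV"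
    by (rule has_sum_int_if_sums_nat) (use assms in \<open>auto simp: has_moments_def\<close>)
  ultimately show ?thesis
    by (simp add: fun_eq_iff ERF_def infsumI)
qed

theorem theorem1:
  fixes L :: nat and K d :: "nat \<Rightarrow> nat" and a :: "nat \<Rightarrow> real"
  assumes "L \<ge> 1"
    and "\<And>l. l \<in> {1..L} \<Longrightarrow> K l \<ge> 1"
    and "\<And>l. l \<in> {1..L} \<Longrightarrow> d l \<ge> 1"
    and "\<And>l. l \<in> {1..L} \<Longrightarrow> 0 \<le> a l \<and> a l < 1"
  shows "(erf_radius (ERF a K d L))\<^sup>2 =
           (\<Sum>l=1..L. (real (d l))\<^sup>2 * ((real (K l))\<^sup>2 - 1) / 12 + a l / (1 - a l)\<^sup>2)
         \<and> ((\<forall>l\<in>{1..L}. a l = 0) \<longrightarrow>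
           (erf_radius (ERF a K d L))\<^sup>2 = (\<Sum>l=1..L. (real (d l))\<^sup>2 * ((real (K l))\<^sup>2 - 1) / 12))"
proof -
  have layers: "\<And>l. l \<in> {1..L} \<Longrightarrow> K l \<ge> 1 \<and> d l \<ge> 1 \<and> 0 \<le> a l \<and> a l < 1"
    using assms(2-4) by blast
  obtain m s where net: "has_moments (net_filter a K d L) 1 m s"
    and variance: "variance_of_moments 1 m s =
      (\<Sum>l=1..L. (real (d l))\<^sup>2 * ((real (K l))\<^sup>2 - 1) / 12 + a l / (1 - a l)\<^sup>2)"
    by (rule has_moments_net_filter[OF layers])
  have radius: "(erf_radius (ERF a K d L))\<^sup>2 =
      (\<Sum>l=1..L. (real (d l))\<^sup>2 * ((real (K l))\<^sup>2 - 1) / 12 + a l / (1 - a l)\<^sup>2)"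
    using erf_radius_power2[OF net] variance
    by (simp add: ERF_eq_net_filter[OF net] variance_of_moments_def)
  moreover have "(\<Sum>l=1..L. (real (d l))\<^sup>2 * ((real (K l))\<^sup>2 - 1) / 12 + a l / (1 - a l)\<^sup>2) =
      (\<Sum>l=1..L. (real (d l))\<^sup>2 * ((real (K l))\<^sup>2 - 1) / 12)" if "\<forall>l\<in>{1..L}. a l = 0"
    using that by (intro sum.cong) auto
  ultimately show ?thesis
    by simp
qed

end
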